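(* Let $P\in\mathbb N_+$, $M\ge2$, $d=\lceil 2P\ln M\rceil$, and let $\mathcal Y$ be a finite set. Let $\mu^{(1)}_1,\dots,\mu^{(1)}_M,\mu^{(2)}_1,\dots,\mu^{(2)}_M:\mathcal Y\to\{0,1/P,2/P,\dots,1\}$. For a finite sequence $\mathbf y=(y_1,\dots,y_n)\in\mathcal Y^n$ define the row vector $\overline{\mathbf M}_{\mathbf y}\in\mathbb R^{2M}$ by $\overline{\mathbf M}_{\mathbf y}=\big(\prod_{q=1}^n\mu^{(1)}_1(y_q),\dots,\prod_{q=1}^n\mu^{(1)}_M(y_q),\prod_{q=1}^n\mu^{(2)}_1(y_q),\dots,\prod_{q=1}^n\mu^{(2)}_M(y_q)\big)$, with $\overline{\mathbf M}_{\emptyset}=(1,\dots,1)$. Then for every $\mathbf y$ of length $n>d$, the vector $\overline{\mathbf M}_{\mathbf y}$ lies in the linear span of $\{\overline{\mathbf M}_{\mathbf y_J}: J\subseteq[n],\ |J|\le d\}$, where $\mathbf y_J=(y_j)_{j\in J}$ (with $\mathbf y_\emptyset=\emptyset$).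
   Context: $\ln$ denotes the natural logarithm. In the paper's application $\mathcal Y=\mathcal S\times\mathcal A\times\mathcal Z$ and $\mu^{(b)}_m(y)$ is the probability of reward $z$ at state–action $(s,a)$ in context $m$ of model $b$. *)

theory Defs
  imports "HOL-Analysis.Analysis"
begin

text \<open>Row vector of R^{2M}, indexed by pairs (b,m) with b in {1,2}, m in {1..M};
  coordinates outside this index range are set to 0.
  mu b m y is the value of mu^{(b)}_m at y; ys is the finite sequence (a list).\<close>
definition Mbar :: "nat \<Rightarrow> (nat \<Rightarrow> nat \<Rightarrow> 'y \<Rightarrow> real) \<Rightarrow> 'y list \<Rightarrow> (nat \<times> nat \<Rightarrow> real)" where
  "Mbar M mu ys = (\<lambda>(b, m). if b \<in> {1, 2} \<and> m \<in> {1..M}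
                             then (\<Prod>q<length ys. mu b m (ys ! q)) else 0)"

definition in_lin_span :: "('i \<Rightarrow> real) \<Rightarrow> ('i \<Rightarrow> real) set \<Rightarrow> bool" where
  "in_lin_span v S \<longleftrightarrow> (\<exists>c. v = (\<lambda>k. \<Sum>u\<in>S. c u * u k))"

end

theory Submission
  imports Defs
begin

text \<open>
  Index the \<open>2M\<close> coordinates by \<open>i = (b, m)\<close> and write \<open>x i q = mu b m (ys ! q)\<close>, a value in the
  grid \<open>{0, 1/P, \<dots>, 1}\<close> of \<open>P + 1\<close> points. If \<open>|K| > d\<close>, a greedy pigeonhole argument yields one
  vector \<open>c\<close> on \<open>K\<close> that agrees with every row \<open>x i\<close> at some position of \<open>K\<close>: fixing the most
  frequent value at one position removes at least the fraction \<open>1/(P+1)\<close> of the remaining rows,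
  and \<open>2M (P/(P+1))^|K| < 1\<close> by the choice of \<open>d\<close>. Hence \<open>\<Prod>q\<in>K. x i q - c q\<close> vanishes for all
  \<open>i\<close> at once, and expanding this product writes \<open>\<Prod>q\<in>K. x i q\<close> as a linear combination of the
  products over proper subsets of \<open>K\<close>, with coefficients independent of \<open>i\<close>.
\<close>

lemma in_lin_span_self:
  assumes "finite S" "v \<in> S"
  shows "in_lin_span v S"
  unfolding in_lin_span_def
proof (intro exI ext)
  fix k
  show "v k = (\<Sum>u\<in>S. (if u = v then 1 else 0) * u k)"
    using assms by (simp add: if_distrib[of "\<lambda>a. a * _"] cong: if_cong)
qed

lemma in_lin_span_sum:
  assumes "finite S" "finite A" "\<And>a. a \<in> A \<Longrightarrow> in_lin_span (f a) S"
  shows "in_lin_span (\<lambda>k. \<Sum>a\<in>A. r a * f a k) S"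
proof -
  obtain c where c: "\<And>a. a \<in> A \<Longrightarrow> f a = (\<lambda>k. \<Sum>u\<in>S. c a u * u k)"
    using assms(3) unfolding in_lin_span_def by metis
  have "(\<Sum>a\<in>A. r a * f a k) = (\<Sum>u\<in>S. (\<Sum>a\<in>A. r a * c a u) * u k)" for k
  proof -
    have "(\<Sum>a\<in>A. r a * f a k) = (\<Sum>a\<in>A. \<Sum>u\<in>S. r a * c a u * u k)"
      by (simp add: c sum_distrib_left mult.assoc)
    also have "\<dots> = (\<Sum>u\<in>S. (\<Sum>a\<in>A. r a * c a u) * u k)"
      by (subst sum.swap) (simp add: sum_distrib_right)
    finally show ?thesis .
  qed
  then show ?thesis
    unfolding in_lin_span_def by (intro exI[of _ "\<lambda>u. \<Sum>a\<in>A. r a * c a u"] ext)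
qed

lemma prod_eq_sum_prod_proper_subsets:
  fixes c :: "'q \<Rightarrow> 'a::comm_ring_1"
  assumes "finite K"
  obtains a where "\<And>x. \<exists>q\<in>K. x q = c q \<Longrightarrow>
    (\<Prod>q\<in>K. x q) = (\<Sum>X\<in>Pow K - {K}. a X * (\<Prod>q\<in>X. x q))"
proof
  fix x :: "'q \<Rightarrow> 'a"
  assume "\<exists>q\<in>K. x q = c q"
  then obtain q0 where "q0 \<in> K" "x q0 = c q0" ..
  let ?g = "\<lambda>X. (-1) ^ card X * (\<Prod>q\<in>X. x q) * (\<Prod>q\<in>K-X. c q)"
  have "(\<Prod>q\<in>K. c q - x q) = 0"
    using \<open>q0 \<in> K\<close> \<open>x q0 = c q0\<close> assms by (intro prod_zero bexI[of _ q0]) simp_all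
  then have "(\<Sum>X\<in>Pow K. ?g X) = 0"
    by (simp add: prod_diff_conv_sum[OF assms])
  moreover have "(\<Sum>X\<in>Pow K. ?g X) = ?g K + (\<Sum>X\<in>Pow K - {K}. ?g X)"
    using assms by (intro sum.remove) auto
  ultimately have "(-1) ^ card K * (\<Prod>q\<in>K. x q) = - (\<Sum>X\<in>Pow K - {K}. ?g X)"
    by (simp add: eq_neg_iff_add_eq_0)
  then have "(\<Prod>q\<in>K. x q) = (-1) ^ card K * - (\<Sum>X\<in>Pow K - {K}. ?g X)"
    by (metis (no_types, lifting) mult.assoc mult_1 power_add[symmetric] mult_2 neg_one_even_power even_add)
  also have "\<dots> = (\<Sum>X\<in>Pow K - {K}.
      - ((-1) ^ card K * (-1) ^ card X * (\<Prod>q\<in>K-X. c q)) * (\<Prod>q\<in>X. x q))"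
    by (simp add: sum_distrib_left sum_negf mult_ac)
  finally show "(\<Prod>q\<in>K. x q) = (\<Sum>X\<in>Pow K - {K}.
      - ((-1) ^ card K * (-1) ^ card X * (\<Prod>q\<in>K-X. c q)) * (\<Prod>q\<in>X. x q))" .
qed

lemma exists_vector_agreeing_with_rows:
  fixes x :: "'i \<Rightarrow> 'q \<Rightarrow> 'v" and P :: nat
  assumes "finite K" "finite C" "finite V" "card V \<le> P + 1"
    and "\<And>i q. i \<in> C \<Longrightarrow> q \<in> K \<Longrightarrow> x i q \<in> V"
    and "real (card C) * (real P / (real P + 1)) ^ card K < 1"
  shows "\<exists>c. \<forall>i\<in>C. \<exists>q\<in>K. x i q = c q"
  using assms(1,2,5,6)
proof (induction K arbitrary: C rule: finite_induct)
  case empty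
  then show ?case by simp
next
  case (insert q K C)
  show ?case
  proof (cases "C = {}")
    case False
    then have "V \<noteq> {}"
      using insert.prems(2) by blast
    then obtain v where "v \<in> V" and v: "card C \<le> card {i\<in>C. x i q = v} * card V"
      using pigeonhole_card[of "\<lambda>i. x i q" C V] insert.prems(1,2) assms(3)
      by (auto simp: vimage_def Int_def conj_commute)
    define C' where "C' = C - {i\<in>C. x i q = v}"
    have "card C' = card C - card {i\<in>C. x i q = v}"
      unfolding C'_def using insert.prems(1) by (intro card_Diff_subset) auto
    moreover have "card C \<le> card {i\<in>C. x i q = v} * (P + 1)"
      using v assms(4) by (meson le_trans mult_le_mono2)
    ultimately have "real (card C') * (real P + 1) \<le> real (card C) * real P"
      by (simp add: card_mono insert.prems(1) algebra_simps flip: of_nat_mult of_nat_add)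
    then have "real (card C') \<le> real (card C) * (real P / (real P + 1))"
      by (simp add: field_simps)
    then have "real (card C') * (real P / (real P + 1)) ^ card K
        \<le> real (card C) * (real P / (real P + 1)) * (real P / (real P + 1)) ^ card K"
      by (rule mult_right_mono) simp
    also have "\<dots> = real (card C) * (real P / (real P + 1)) ^ card (insert q K)"
      using insert.hyps by (simp add: mult.assoc)
    finally have "real (card C') * (real P / (real P + 1)) ^ card K < 1"
      using insert.prems(3) by linarith
    moreover have "finite C'"
      using insert.prems(1) by (simp add: C'_def)
    moreover have "x i q' \<in> V" if "i \<in> C'" "q' \<in> K" for i q'
      using that insert.prems(2) by (simp add: C'_def)
    ultimately obtain c where c: "\<forall>i\<in>C'. \<exists>q'\<in>K. x i q' = c q'"
      using insert.IH by blast
    have "\<exists>q'\<in>insert q K. x i q' = (c(q := v)) q'" if i: "i \<in> C" for i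
    proof (cases "x i q = v")
      case False
      then obtain q' where "q' \<in> K" "x i q' = c q'"
        using i c by (auto simp: C'_def)
      then show ?thesis
        using insert.hyps(2) by (intro bexI[of _ q']) auto
    qed simp
    then show ?thesis by blast
  qed simp
qed

lemma mult_power_ratio_lt_one:
  fixes P M n :: nat
  assumes "P \<ge> 1" "M \<ge> 2" "2 * real P * ln (real M) + 1 \<le> real n"
  shows "real (2 * M) * (real P / (real P + 1)) ^ n < 1"
proof -
  have "0 \<le> (2 * real P - 1) * (ln (real M) - ln 2)"
    using assms(1,2) by (intro mult_nonneg_nonneg) auto
  then have "(ln 2 + ln (real M)) * (2 * real P + 1) < (2 * real P * ln (real M) + 1) * 2"
    using ln_2_less_1 by (simp add: algebra_simps)
  then have "ln (real (2 * M)) < (2 * real P * ln (real M) + 1) * (2 / (2 * real P + 1))"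
    using assms(2) by (simp add: ln_mult field_simps)
  also have "\<dots> \<le> real n * (2 / (2 * real P + 1))"
    using assms(3) by (intro mult_right_mono) auto
  also have "\<dots> \<le> real n * (ln (real P + 1) - ln (real P))"
    using ln_inverse_approx_ge[of "real P" "real P + 1"] assms(1) by (intro mult_left_mono) auto
  also have "\<dots> = ln (((real P + 1) / real P) ^ n)"
    using assms(1) by (simp add: ln_realpow ln_div)
  finally have "real (2 * M) < ((real P + 1) / real P) ^ n"
    using assms by (subst (asm) ln_less_cancel_iff) auto
  then show ?thesis
    using assms(1) by (simp add: field_simps)
qed

definition prod_vector :: "'i set \<Rightarrow> ('i \<Rightarrow> 'q \<Rightarrow> real) \<Rightarrow> 'q set \<Rightarrow> 'i \<Rightarrow> real" where
  "prod_vector C x K = (\<lambda>i. if i \<in> C then \<Prod>q\<in>K. x i q else 0)"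

lemma prod_vector_in_lin_span_small_subsets:
  assumes "finite N"
    and hit: "\<And>K. K \<subseteq> N \<Longrightarrow> d < card K \<Longrightarrow> \<exists>c. \<forall>i\<in>C. \<exists>q\<in>K. x i q = c q"
    and "K \<subseteq> N"
  shows "in_lin_span (prod_vector C x K) (prod_vector C x ` {J. J \<subseteq> N \<and> card J \<le> d})"
  using \<open>K \<subseteq> N\<close>
proof (induction "card K" arbitrary: K rule: less_induct)
  case less
  let ?S = "prod_vector C x ` {J. J \<subseteq> N \<and> card J \<le> d}"
  have "finite ?S"
    using \<open>finite N\<close> by simp
  have "finite K"
    using less.prems \<open>finite N\<close> finite_subset by blast
  show ?case
  proof (cases "card K \<le> d")
    case True
    then show ?thesis
      using less.prems \<open>finite ?S\<close> by (intro in_lin_span_self) auto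
  next
    case False
    then obtain c where c: "\<forall>i\<in>C. \<exists>q\<in>K. x i q = c q"
      using hit less.prems by force
    obtain a where a: "\<And>y. \<exists>q\<in>K. y q = c q \<Longrightarrow>
        (\<Prod>q\<in>K. y q) = (\<Sum>X\<in>Pow K - {K}. a X * (\<Prod>q\<in>X. y q))"
      using prod_eq_sum_prod_proper_subsets[OF \<open>finite K\<close>] by blast
    have expand: "prod_vector C x K = (\<lambda>i. \<Sum>X\<in>Pow K - {K}. a X * prod_vector C x X i)"
      using a c by (auto simp: prod_vector_def)
    have "in_lin_span (prod_vector C x X) ?S" if "X \<in> Pow K - {K}" for X
    proof (rule less.hyps)
      show "card X < card K"
        using that \<open>finite K\<close> by (auto intro: psubset_card_mono)
      show "X \<subseteq> N"
        using that less.prems by auto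
    qed
    then show ?thesis
      unfolding expand using \<open>finite ?S\<close> \<open>finite K\<close> by (intro in_lin_span_sum) auto
  qed
qed

lemma prod_list_map_nths:
  "prod_list (map f (nths xs J)) = (\<Prod>q\<in>J \<inter> {..<length xs}. f (xs ! q))"
proof -
  have "prod_list (map f (nths xs J)) = (\<Prod>q<length xs. if q \<in> J then f (xs ! q) else 1)"
  proof (induction xs arbitrary: J)
    case (Cons y xs)
    have "(\<Prod>q<length (y # xs). if q \<in> J then f ((y # xs) ! q) else 1)
        = (if 0 \<in> J then f y else 1) * (\<Prod>q<length xs. if Suc q \<in> J then f (xs ! q) else 1)"
      by (simp only: length_Cons prod.lessThan_Suc_shift nth_Cons_0 nth_Cons_Suc)
    then show ?case
      using Cons.IH[of "{j. Suc j \<in> J}"] by (simp add: nths_Cons)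
  qed simp
  also have "\<dots> = (\<Prod>q\<in>{..<length xs} \<inter> J. f (xs ! q))"
    by (simp add: prod.inter_restrict)
  finally show ?thesis
    by (simp add: Int_commute)
qed

lemma Mbar_nths_eq_prod_vector:
  assumes "J \<subseteq> {..<length ys}"
  shows "Mbar M mu (nths ys J)
    = prod_vector ({1, 2} \<times> {1..M}) (\<lambda>(b, m) q. mu b m (ys ! q)) J"
proof -
  have "(\<Prod>q<length (nths ys J). g (nths ys J ! q)) = (\<Prod>q\<in>J. g (ys ! q))" for g :: "_ \<Rightarrow> real"
    using prod_list_map_nths[of g ys J] assms
    by (simp add: prod.list_conv_set_nth atLeast0LessThan Int_absorb2)
  then show ?thesis
    unfolding Mbar_def prod_vector_def by (auto simp: fun_eq_iff)
qed

lemma exists_vector_agreeing_with_all_mu: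
  fixes mu :: "nat \<Rightarrow> nat \<Rightarrow> 'y \<Rightarrow> real"
  assumes "P \<ge> 1" "M \<ge> 2"
    and "\<And>b m y. b \<in> {1, 2} \<Longrightarrow> m \<in> {1..M} \<Longrightarrow> y \<in> Y \<Longrightarrow>
           \<exists>k::nat. k \<le> P \<and> mu b m y = real k / real P"
    and "set ys \<subseteq> Y" "K \<subseteq> {..<length ys}"
    and "2 * real P * ln (real M) + 1 \<le> real (card K)"
  shows "\<exists>c. \<forall>(b, m) \<in> {1, 2} \<times> {1..M}. \<exists>q\<in>K. mu b m (ys ! q) = c q"
proof -
  define V where "V = (\<lambda>k. real k / real P) ` {..P}"
  have "\<exists>c. \<forall>i\<in>{1::nat, 2} \<times> {1..M}. \<exists>q\<in>K. mu (fst i) (snd i) (ys ! q) = c q"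
  proof (rule exists_vector_agreeing_with_rows)
    show "finite K" "finite V" "card V \<le> P + 1"
      using assms(5) finite_subset card_image_le[of "{..P}"] unfolding V_def by auto
    show "mu (fst i) (snd i) (ys ! q) \<in> V" if "i \<in> {1, 2} \<times> {1..M}" "q \<in> K" for i q
    proof -
      have "ys ! q \<in> Y"
        using \<open>q \<in> K\<close> assms(4,5) by (meson lessThan_iff nth_mem subsetD)
      then show ?thesis
        using assms(3)[of "fst i" "snd i"] that(1) unfolding V_def by (auto simp: mem_Times_iff)
    qed
    show "real (card ({1::nat, 2} \<times> {1..M})) * (real P / (real P + 1)) ^ card K < 1"
      using mult_power_ratio_lt_one[OF assms(1,2,6)] by simp
  qed simp
  then show ?thesis
    by auto
qed

theorem lemma8:
  fixes P M :: nat and Y :: "'y set" and mu :: "nat \<Rightarrow> nat \<Rightarrow> 'y \<Rightarrow> real"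
    and ys :: "'y list"
  assumes "P \<ge> 1" and "M \<ge> 2" and "finite Y"
    and "\<And>b m y. b \<in> {1, 2} \<Longrightarrow> m \<in> {1..M} \<Longrightarrow> y \<in> Y \<Longrightarrow>
           \<exists>k::nat. k \<le> P \<and> mu b m y = real k / real P"
    and "set ys \<subseteq> Y"
    and "int (length ys) > \<lceil>2 * real P * ln (real M)\<rceil>"
  shows "in_lin_span (Mbar M mu ys)
           ((\<lambda>J. Mbar M mu (nths ys J)) `
              {J. J \<subseteq> {0..<length ys} \<and> int (card J) \<le> \<lceil>2 * real P * ln (real M)\<rceil>})"
proof -
  define d where "d = nat \<lceil>2 * real P * ln (real M)\<rceil>"
  define C where "C = {1::nat, 2} \<times> {1..M}"
  define x where "x = (\<lambda>(b, m) q. mu b m (ys ! q))"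
  have "0 \<le> 2 * real P * ln (real M)"
    using assms(2) by (intro mult_nonneg_nonneg ln_ge_zero) auto
  then have "0 \<le> \<lceil>2 * real P * ln (real M)\<rceil>"
    by simp
  then have card_le_d: "card J \<le> d \<longleftrightarrow> int (card J) \<le> \<lceil>2 * real P * ln (real M)\<rceil>" for J
    unfolding d_def by (rule le_nat_iff)
  have "\<exists>c. \<forall>i\<in>C. \<exists>q\<in>K. x i q = c q" if "K \<subseteq> {..<length ys}" "d < card K" for K
  proof -
    have "2 * real P * ln (real M) + 1 \<le> real (card K)"
      using that(2) card_le_d[of K] by linarith
    then show ?thesis
      using exists_vector_agreeing_with_all_mu[OF assms(1,2,4,5) that(1)]
      unfolding C_def x_def by auto
  qed
  then have "in_lin_span (prod_vector C x {..<length ys})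
      (prod_vector C x ` {J. J \<subseteq> {..<length ys} \<and> card J \<le> d})"
    by (intro prod_vector_in_lin_span_small_subsets) auto
  moreover have "Mbar M mu ys = prod_vector C x {..<length ys}"
    using Mbar_nths_eq_prod_vector[of "{..<length ys}" ys M mu] unfolding C_def x_def by simp
  moreover have "prod_vector C x ` {J. J \<subseteq> {..<length ys} \<and> card J \<le> d}
      = (\<lambda>J. Mbar M mu (nths ys J)) `
          {J. J \<subseteq> {0..<length ys} \<and> int (card J) \<le> \<lceil>2 * real P * ln (real M)\<rceil>}"
    unfolding card_le_d atLeast0LessThan C_def x_def
    by (intro image_cong) (simp_all add: Mbar_nths_eq_prod_vector)
  ultimately show ?thesis
    by simp
qed

end
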